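(* Let $J=JCK(Z,\delta)$ and $K=Z\oplus Zx$. Relative to the $\mathbb Z_2^2$-grading of $\mathrm{Der}(J)$ induced by the grading of $J$, one has $\mathrm{Der}(J)_{\bar0}^{[\bar0,\bar0]}=\{\tilde\partial:\partial\in\mathrm{Der}(K)_{\bar0}\}$, $\mathrm{Inder}(J)_{\bar0}^{[\bar0,\bar0]}=D(x,Zx)=\{\tilde\partial:\partial\in\mathrm{Inder}(K)_{\bar0}\}=\{\tilde\partial:\partial=\check\mu \text{ for some }\mu\in Z\delta\}$, $\mathrm{Der}(J)_{\bar0}^{[\bar1,\bar0]}=D(w_2,Zw_3)$, $\mathrm{Der}(J)_{\bar0}^{[\bar0,\bar1]}=D(w_3,Zw_1)$, $\mathrm{Der}(J)_{\bar0}^{[\bar1,\bar1]}=D(w_1,Zw_2)$, and $\mathrm{Der}(J)_{\bar0}$ is the direct sum of these four components; in particular every even derivation of $J$ with component outside $[\bar0,\bar0]$ is inner.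
   Context: Let $\mathbb F$ be a field of characteristic $\neq 2$, $Z$ a unital commutative associative $\mathbb F$-algebra, and $\delta$ a derivation of $Z$ such that $Z\delta(Z)=Z$ (the $\mathbb F$-span of all products $f\delta(g)$, $f,g\in Z$, is $Z$). The Cheng-Kac Jordan superalgebra $J=JCK(Z,\delta)=J_{\bar0}\oplus J_{\bar1}$ is defined as follows: $J_{\bar0}=Z1\oplus Zw_1\oplus Zw_2\oplus Zw_3$ and $J_{\bar1}=Zx\oplus Zx_1\oplus Zx_2\oplus Zx_3$ are free $Z$-modules of rank 4; $J_{\bar0}$ is the $Z$-algebra $(\mathbb F1\oplus\mathbb Fw_1\oplus\mathbb Fw_2\oplus\mathbb Fw_3)\otimes_{\mathbb F}Z$ with $1$ the identity, $w_1^2=w_2^2=1$, $w_3^2=-1$, $w_iw_j=0$ for $i\ne j$. For $f,g\in Z$ and $i,j\in\{1,2,3\}$ the remaining products are: $f(gx)=(fg)x$, $f(gx_j)=(fg)x_j$, $(fw_i)(gx)=(\delta(f)g)x_i$, $(fw_i)(gx_j)=-(fg)x_{i\times j}$, $(fx)(gx)=\delta(f)g-f\delta(g)$, $(fx)(gx_j)=-(fg)w_j$, $(fx_i)(gx)=(fg)w_i$, $(fx_i)(gx_j)=0$, extended by supercommutativity ($ab=(-1)^{|a||b|}ba$), where $x_{1\times2}=-x_{2\times1}=x_3$, $x_{1\times3}=-x_{3\times1}=x_2$, $x_{3\times2}=-x_{2\times3}=x_1$, $x_{i\times i}=0$. $J$ is $\mathbb Z_2^2$-graded by $J^{[\bar0,\bar0]}=Z\oplus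 Zx$, $J^{[\bar1,\bar0]}=Zw_1\oplus Zx_1$, $J^{[\bar0,\bar1]}=Zw_2\oplus Zx_2$, $J^{[\bar1,\bar1]}=Zw_3\oplus Zx_3$, and $\mathrm{Der}(J)^{\alpha}$ denotes the derivations mapping each $J^{\beta}$ into $J^{\alpha+\beta}$. Derivations are super derivations (homogeneous $d$ with $d(ab)=d(a)b+(-1)^{|d||a|}ad(b)$); $D(a,b)$ is $c\mapsto a(bc)-(-1)^{|a||b|}b(ac)$; $\mathrm{Inder}$ is the span of all $D(a,b)$; $D(A,B)$ denotes the span of $D(a,b)$, $a\in A,b\in B$. $K=Z\oplus Zx$ is a subalgebra of $J$. For $\mu\in\mathrm{Der}(Z)$ with $[\mu,\delta]=2a\delta$, $\check\mu$ is the even derivation of $K$ with $\check\mu|_Z=\mu$, $\check\mu(x)=ax$; every even derivation of $K$ is of this form. For $\partial\in\mathrm{Der}(K)_{\bar0}$ with $\mu=\partial|_Z$ and $a\in Z$ such that $\partial(x)=ax$, $\tilde\partial$ denotes the even derivation of $J$ given by $\tilde\partial|_K=\partial$, $\tilde\partial(fw_i)=\mu(f)w_i$, $\tilde\partial(fx_i)=(\mu(f)-af)x_i$ for $f\in Z$, $i=1,2,3$. *)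

theory Defs
  imports Main
begin

text \<open>Elements of the Cheng-Kac superalgebra JCK(Z,delta): an element is
  sc 1 + w1c w1 + w2c w2 + w3c w3 + xc x + x1c x1 + x2c x2 + x3c x3 with coefficients in Z.\<close>

datatype 'z jck = JE (sc: 'z) (w1c: 'z) (w2c: 'z) (w3c: 'z) (xc: 'z) (x1c: 'z) (x2c: 'z) (x3c: 'z)

instantiation jck :: (ab_group_add) ab_group_add
begin
definition zero_jck_def: "0 = JE 0 0 0 0 0 0 0 0"
definition plus_jck_def: "a + b = JE (sc a + sc b) (w1c a + w1c b) (w2c a + w2c b) (w3c a + w3c b)
   (xc a + xc b) (x1c a + x1c b) (x2c a + x2c b) (x3c a + x3c b)"
definition minus_jck_def: "a - b = JE (sc a - sc b) (w1c a - w1c b) (w2c a - w2c b) (w3c a - w3c b)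
   (xc a - xc b) (x1c a - x1c b) (x2c a - x2c b) (x3c a - x3c b)"
definition uminus_jck_def: "- a = JE (- sc a) (- w1c a) (- w2c a) (- w3c a)
   (- xc a) (- x1c a) (- x2c a) (- x3c a)"
instance
  by standard (simp_all add: zero_jck_def plus_jck_def minus_jck_def uminus_jck_def algebra_simps)
end

definition zmul :: "'z::comm_ring_1 \<Rightarrow> 'z jck \<Rightarrow> 'z jck" where
  "zmul z a = JE (z * sc a) (z * w1c a) (z * w2c a) (z * w3c a)
                 (z * xc a) (z * x1c a) (z * x2c a) (z * x3c a)"

text \<open>The product of JCK(Z,delta), obtained by F-bilinear extension of the multiplication table.\<close>
definition jmul :: "('z::comm_ring_1 \<Rightarrow> 'z) \<Rightarrow> 'z jck \<Rightarrow> 'z jck \<Rightarrow> 'z jck" where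
  "jmul \<delta> a c = JE
     (sc a * sc c + w1c a * w1c c + w2c a * w2c c - w3c a * w3c c
        + \<delta> (xc a) * xc c - xc a * \<delta> (xc c))
     (sc a * w1c c + w1c a * sc c - xc a * x1c c + x1c a * xc c)
     (sc a * w2c c + w2c a * sc c - xc a * x2c c + x2c a * xc c)
     (sc a * w3c c + w3c a * sc c - xc a * x3c c + x3c a * xc c)
     (sc a * xc c + sc c * xc a)
     (sc a * x1c c + \<delta> (w1c a) * xc c + w2c a * x3c c - w3c a * x2c c
        + sc c * x1c a + \<delta> (w1c c) * xc a + w2c c * x3c a - w3c c * x2c a)
     (sc a * x2c c + \<delta> (w2c a) * xc c - w1c a * x3c c + w3c a * x1c c
        + sc c * x2c a + \<delta> (w2c c) * xc a - w1c c * x3c a + w3c c * x1c a)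
     (sc a * x3c c + \<delta> (w3c a) * xc c - w1c a * x2c c + w2c a * x1c c
        + sc c * x3c a + \<delta> (w3c c) * xc a - w1c c * x2c a + w2c c * x1c a)"

definition w1J :: "'z::comm_ring_1 jck" where "w1J = JE 0 1 0 0 0 0 0 0"
definition w2J :: "'z::comm_ring_1 jck" where "w2J = JE 0 0 1 0 0 0 0 0"
definition w3J :: "'z::comm_ring_1 jck" where "w3J = JE 0 0 0 1 0 0 0 0"
definition xJ  :: "'z::comm_ring_1 jck" where "xJ  = JE 0 0 0 0 1 0 0 0"

definition J0 :: "'z::comm_ring_1 jck set" where
  "J0 = {e. xc e = 0 \<and> x1c e = 0 \<and> x2c e = 0 \<and> x3c e = 0}"
definition J1 :: "'z::comm_ring_1 jck set" where
  "J1 = {e. sc e = 0 \<and> w1c e = 0 \<and> w2c e = 0 \<and> w3c e = 0}"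
definition homog :: "'z::comm_ring_1 jck \<Rightarrow> bool" where
  "homog a \<longleftrightarrow> a \<in> J0 \<or> a \<in> J1"

text \<open>The Z_2^2-grading; Z_2^2 is represented as bool \<times> bool with componentwise xor.\<close>
fun gcomp :: "bool \<times> bool \<Rightarrow> 'z::comm_ring_1 jck set" where
  "gcomp (False, False) = {e. w1c e = 0 \<and> w2c e = 0 \<and> w3c e = 0 \<and> x1c e = 0 \<and> x2c e = 0 \<and> x3c e = 0}"
| "gcomp (True, False) = {e. sc e = 0 \<and> w2c e = 0 \<and> w3c e = 0 \<and> xc e = 0 \<and> x2c e = 0 \<and> x3c e = 0}"
| "gcomp (False, True) = {e. sc e = 0 \<and> w1c e = 0 \<and> w3c e = 0 \<and> xc e = 0 \<and> x1c e = 0 \<and> x3c e = 0}"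
| "gcomp (True, True) = {e. sc e = 0 \<and> w1c e = 0 \<and> w2c e = 0 \<and> xc e = 0 \<and> x1c e = 0 \<and> x2c e = 0}"

definition gadd :: "bool \<times> bool \<Rightarrow> bool \<times> bool \<Rightarrow> bool \<times> bool" where
  "gadd \<alpha> \<beta> = (fst \<alpha> \<noteq> fst \<beta>, snd \<alpha> \<noteq> snd \<beta>)"

text \<open>F-linearity on a subset S, where F acts on Z through the structure map emb.\<close>
definition flin :: "('f \<Rightarrow> 'z::comm_ring_1) \<Rightarrow> ('z jck \<Rightarrow> 'z jck) \<Rightarrow> 'z jck set \<Rightarrow> bool" where
  "flin emb d S \<longleftrightarrow> (\<forall>a\<in>S. \<forall>b\<in>S. d (a + b) = d a + d b)
                    \<and> (\<forall>k. \<forall>a\<in>S. d (zmul (emb k) a) = zmul (emb k) (d a))"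

definition EvenDerJ :: "('f \<Rightarrow> 'z::comm_ring_1) \<Rightarrow> ('z \<Rightarrow> 'z) \<Rightarrow> ('z jck \<Rightarrow> 'z jck) set" where
  "EvenDerJ emb \<delta> = {d. flin emb d UNIV \<and> (\<forall>a\<in>J0. d a \<in> J0) \<and> (\<forall>a\<in>J1. d a \<in> J1)
      \<and> (\<forall>a b. d (jmul \<delta> a b) = jmul \<delta> (d a) b + jmul \<delta> a (d b))}"

definition DerJ0 :: "('f \<Rightarrow> 'z::comm_ring_1) \<Rightarrow> ('z \<Rightarrow> 'z) \<Rightarrow> bool \<times> bool \<Rightarrow> ('z jck \<Rightarrow> 'z jck) set" where
  "DerJ0 emb \<delta> \<alpha> = {d \<in> EvenDerJ emb \<delta>. \<forall>\<beta>. \<forall>a\<in>gcomp \<beta>. d a \<in> gcomp (gadd \<alpha> \<beta>)}"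

text \<open>The subalgebra K = Z + Zx, its even and odd parts.\<close>
definition Kset :: "'z::comm_ring_1 jck set" where "Kset = gcomp (False, False)"
definition K0 :: "'z::comm_ring_1 jck set" where "K0 = Kset \<inter> J0"
definition K1 :: "'z::comm_ring_1 jck set" where "K1 = Kset \<inter> J1"

text \<open>Even derivations of K (as maps on J; only their values on K matter).\<close>
definition DerK0 :: "('f \<Rightarrow> 'z::comm_ring_1) \<Rightarrow> ('z \<Rightarrow> 'z) \<Rightarrow> ('z jck \<Rightarrow> 'z jck) set" where
  "DerK0 emb \<delta> = {d. (\<forall>a\<in>K0. d a \<in> K0) \<and> (\<forall>a\<in>K1. d a \<in> K1) \<and> flin emb d Kset
      \<and> (\<forall>a\<in>Kset. \<forall>b\<in>Kset. d (jmul \<delta> a b) = jmul \<delta> (d a) b + jmul \<delta> a (d b))}"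

text \<open>D(a,b)(c) = a(bc) - (-1)^{|a||b|} b(ac), for homogeneous a, b.\<close>
definition Dop :: "('z::comm_ring_1 \<Rightarrow> 'z) \<Rightarrow> 'z jck \<Rightarrow> 'z jck \<Rightarrow> 'z jck \<Rightarrow> 'z jck" where
  "Dop \<delta> a b = (\<lambda>c. if a \<in> J1 \<and> b \<in> J1
      then jmul \<delta> a (jmul \<delta> b c) + jmul \<delta> b (jmul \<delta> a c)
      else jmul \<delta> a (jmul \<delta> b c) - jmul \<delta> b (jmul \<delta> a c))"

definition spanF :: "('f \<Rightarrow> 'z::comm_ring_1) \<Rightarrow> ('z jck \<Rightarrow> 'z jck) set \<Rightarrow> ('z jck \<Rightarrow> 'z jck) set" where
  "spanF emb S = {(\<lambda>c. \<Sum>i<n. zmul (emb (k i)) (g i c)) | (n::nat) k g. \<forall>i<n. g i \<in> S}"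

definition InderJ :: "('f \<Rightarrow> 'z::comm_ring_1) \<Rightarrow> ('z \<Rightarrow> 'z) \<Rightarrow> ('z jck \<Rightarrow> 'z jck) set" where
  "InderJ emb \<delta> = spanF emb {Dop \<delta> a b | a b. homog a \<and> homog b}"

definition InderK0 :: "('f \<Rightarrow> 'z::comm_ring_1) \<Rightarrow> ('z \<Rightarrow> 'z) \<Rightarrow> ('z jck \<Rightarrow> 'z jck) set" where
  "InderK0 emb \<delta> = spanF emb {Dop \<delta> a b | a b. a \<in> Kset \<and> b \<in> Kset \<and> homog a \<and> homog b}
                    \<inter> DerK0 emb \<delta>"

text \<open>The extension of an even derivation of K to J.\<close>
definition tildeD :: "('z::comm_ring_1 jck \<Rightarrow> 'z jck) \<Rightarrow> 'z jck \<Rightarrow> 'z jck" where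
  "tildeD d = (\<lambda>e. let \<mu> = (\<lambda>f. sc (d (JE f 0 0 0 0 0 0 0))); a = xc (d xJ) in
      d (JE (sc e) 0 0 0 (xc e) 0 0 0)
      + JE 0 (\<mu> (w1c e)) (\<mu> (w2c e)) (\<mu> (w3c e)) 0
           (\<mu> (x1c e) - a * x1c e) (\<mu> (x2c e) - a * x2c e) (\<mu> (x3c e) - a * x3c e))"

definition checkK :: "('z::comm_ring_1 \<Rightarrow> 'z) \<Rightarrow> 'z \<Rightarrow> 'z jck \<Rightarrow> 'z jck" where
  "checkK \<mu> a = (\<lambda>e. JE (\<mu> (sc e)) 0 0 0 (\<mu> (xc e) + a * xc e) 0 0 0)"

end

theory Submission imports Defs begin

(*
  An element of J has eight Z-coordinates, and an even derivation d of Z_2^2-degree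
  alpha maps the piece Z u (u one of the basis vectors 1, w_i, x, x_i, of degree beta) into
  the piece of the same parity and degree alpha + beta, so it is described by eight maps
  Z -> Z.  The Leibniz rule on a few products of basis vectors then determines d:
    * degree [0,0]: d = check_ext mu a, acting by a derivation mu of Z on every coordinate,
      shifted by +a on x and by -a on x_1, x_2, x_3, where [mu,delta] = 2 a delta; this is
      the extension tilde of the even derivation check mu of K = Z + Zx;
    * degree alpha /= [0,0]: d = der10 p, der01 p or der11 p for one p in Z, and these maps
      are the inner derivations D(w_2, p w_3), D(w_3, p w_1), D(w_1, p w_2).
  Inner derivations act on Z by a multiple c delta; with Z delta(Z) = Z this forces an
  inner check_ext mu a to be D(x, G x) with G = -c/2.  Finally Der(J)_0 is the direct sum of
  its homogeneous components: the component of degree alpha is the average of the conjugates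
  of d by the four character automorphisms of the grading (this needs char F /= 2).
*)

section \<open>Coordinates and the grading\<close>

lemmas jck_ops = plus_jck_def minus_jck_def uminus_jck_def zero_jck_def zmul_def

abbreviation "zE f \<equiv> JE f 0 0 0 0 0 0 0"
abbreviation "w1E f \<equiv> JE 0 f 0 0 0 0 0 0"
abbreviation "w2E f \<equiv> JE 0 0 f 0 0 0 0 0"
abbreviation "w3E f \<equiv> JE 0 0 0 f 0 0 0 0"
abbreviation "xE f \<equiv> JE 0 0 0 0 f 0 0 0"
abbreviation "x1E f \<equiv> JE 0 0 0 0 0 f 0 0"
abbreviation "x2E f \<equiv> JE 0 0 0 0 0 0 f 0"
abbreviation "x3E f \<equiv> JE 0 0 0 0 0 0 0 f"

lemma zmul_add: "zmul z (u + v) = zmul z u + zmul z (v::'z::comm_ring_1 jck)"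
  and zmul_zmul: "zmul z (zmul w u) = zmul (z * w) u"
  by (simp_all add: jck_ops algebra_simps)

lemma jck_coordinates: "(e::'z::comm_ring_1 jck) = zE (sc e) + (w1E (w1c e) + (w2E (w2c e)
   + (w3E (w3c e) + (xE (xc e) + (x1E (x1c e) + (x2E (x2c e) + x3E (x3c e)))))))"
  by (cases e) (simp add: jck_ops)

lemma degree_cases:
  obtains "\<beta> = (False, False)" | "\<beta> = (True, False)" | "\<beta> = (False, True)" | "\<beta> = (True, True)"
  by (cases \<beta>) auto

fun evb :: "bool \<times> bool \<Rightarrow> 'z::comm_ring_1 \<Rightarrow> 'z jck" where
  "evb (False, False) = (\<lambda>f. zE f)" | "evb (True, False) = (\<lambda>f. w1E f)"
| "evb (False, True) = (\<lambda>f. w2E f)" | "evb (True, True) = (\<lambda>f. w3E f)"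

fun odb :: "bool \<times> bool \<Rightarrow> 'z::comm_ring_1 \<Rightarrow> 'z jck" where
  "odb (False, False) = (\<lambda>f. xE f)" | "odb (True, False) = (\<lambda>f. x1E f)"
| "odb (False, True) = (\<lambda>f. x2E f)" | "odb (True, True) = (\<lambda>f. x3E f)"

fun evc :: "bool \<times> bool \<Rightarrow> 'z::comm_ring_1 jck \<Rightarrow> 'z" where
  "evc (False, False) = sc" | "evc (True, False) = w1c"
| "evc (False, True) = w2c" | "evc (True, True) = w3c"

fun odc :: "bool \<times> bool \<Rightarrow> 'z::comm_ring_1 jck \<Rightarrow> 'z" where
  "odc (False, False) = xc" | "odc (True, False) = x1c"
| "odc (False, True) = x2c" | "odc (True, True) = x3c"

lemma piece_in_degree: "evb \<beta> f \<in> gcomp \<beta>" "evb \<beta> f \<in> J0" "odb \<beta> f \<in> gcomp \<beta>" "odb \<beta> f \<in> J1"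
  by (cases \<beta> rule: degree_cases; simp add: J0_def J1_def)+

lemma even_piece: "y \<in> gcomp \<beta> \<Longrightarrow> y \<in> J0 \<Longrightarrow> y = evb \<beta> (evc \<beta> y)"
  by (cases \<beta> rule: degree_cases; cases y) (auto simp: J0_def)

lemma odd_piece: "y \<in> gcomp \<beta> \<Longrightarrow> y \<in> J1 \<Longrightarrow> y = odb \<beta> (odc \<beta> y)"
  by (cases \<beta> rule: degree_cases; cases y) (auto simp: J1_def)

definition part :: "bool \<times> bool \<Rightarrow> 'z::comm_ring_1 jck \<Rightarrow> 'z jck" where
  "part \<beta> c = evb \<beta> (evc \<beta> c) + odb \<beta> (odc \<beta> c)"

lemma part_in: "part \<beta> c \<in> gcomp \<beta>"
  by (cases \<beta> rule: degree_cases) (auto simp: part_def jck_ops)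

lemma sum_of_parts: "c = part (False,False) c + part (True,False) c + part (False,True) c + part (True,True) c"
  by (cases c) (simp add: part_def jck_ops)

lemma gcomp_diff: "u \<in> gcomp \<gamma> \<Longrightarrow> v \<in> gcomp \<gamma> \<Longrightarrow> u - v \<in> gcomp \<gamma>"
  by (cases \<gamma> rule: degree_cases) (auto simp: jck_ops)

lemma degrees_independent:
  assumes "y1 \<in> gcomp (gadd (False,False) \<beta>)" "y2 \<in> gcomp (gadd (True,False) \<beta>)"
    "y3 \<in> gcomp (gadd (False,True) \<beta>)" "y4 \<in> gcomp (gadd (True,True) \<beta>)"
    and "y1 + y2 + y3 + y4 = (0::'z::comm_ring_1 jck)"
  shows "y1 = 0 \<and> y2 = 0 \<and> y3 = 0 \<and> y4 = 0"
  using assms by (cases \<beta> rule: degree_cases; cases y1; cases y2; cases y3; cases y4)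
    (auto simp: gadd_def jck_ops)

section \<open>Derivations of a fixed degree\<close>

lemma EvenDerJ_add: "d \<in> EvenDerJ emb \<delta> \<Longrightarrow> d (a + b) = d a + d b"
  and EvenDerJ_zmul: "d \<in> EvenDerJ emb \<delta> \<Longrightarrow> d (zmul (emb k) a) = zmul (emb k) (d a)"
  and EvenDerJ_leibniz: "d \<in> EvenDerJ emb \<delta> \<Longrightarrow> d (jmul \<delta> a b) = jmul \<delta> (d a) b + jmul \<delta> a (d b)"
  and EvenDerJ_J0: "d \<in> EvenDerJ emb \<delta> \<Longrightarrow> a \<in> J0 \<Longrightarrow> d a \<in> J0"
  and EvenDerJ_J1: "d \<in> EvenDerJ emb \<delta> \<Longrightarrow> a \<in> J1 \<Longrightarrow> d a \<in> J1"
  unfolding EvenDerJ_def flin_def by blast+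

lemma EvenDerJ_zero: "d \<in> EvenDerJ emb \<delta> \<Longrightarrow> d 0 = 0"
  using EvenDerJ_add[of d emb \<delta> 0 0] by simp

lemma DerJ0_even: "d \<in> DerJ0 emb \<delta> \<alpha> \<Longrightarrow> d \<in> EvenDerJ emb \<delta>"
  and DerJ0_shift: "d \<in> DerJ0 emb \<delta> \<alpha> \<Longrightarrow> a \<in> gcomp \<beta> \<Longrightarrow> d a \<in> gcomp (gadd \<alpha> \<beta>)"
  unfolding DerJ0_def by blast+

lemma DerJ0I:
  assumes "\<And>u v. d (u + v) = d u + d v" and "\<And>k u. d (zmul (emb k) u) = zmul (emb k) (d u)"
    and "\<And>u. u \<in> J0 \<Longrightarrow> d u \<in> J0" and "\<And>u. u \<in> J1 \<Longrightarrow> d u \<in> J1"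
    and "\<And>u v. d (jmul \<delta> u v) = jmul \<delta> (d u) v + jmul \<delta> u (d v)"
    and "\<And>\<beta>. \<forall>u\<in>gcomp \<beta>. d u \<in> gcomp (gadd \<alpha> \<beta>)"
  shows "d \<in> DerJ0 emb \<delta> \<alpha>"
  using assms unfolding DerJ0_def EvenDerJ_def flin_def by blast

lemma DerJ0_even_piece:
  assumes d: "d \<in> DerJ0 emb \<delta> \<alpha>"
  shows "\<exists>\<phi>. \<forall>f. d (evb \<beta> f) = evb (gadd \<alpha> \<beta>) (\<phi> f)"
proof (intro exI allI)
  fix f
  have "d (evb \<beta> f) \<in> gcomp (gadd \<alpha> \<beta>)" "d (evb \<beta> f) \<in> J0"
    using DerJ0_shift[OF d] EvenDerJ_J0[OF DerJ0_even[OF d]] piece_in_degree by blast+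
  then show "d (evb \<beta> f) = evb (gadd \<alpha> \<beta>) (evc (gadd \<alpha> \<beta>) (d (evb \<beta> f)))"
    by (rule even_piece)
qed

lemma DerJ0_odd_piece:
  assumes d: "d \<in> DerJ0 emb \<delta> \<alpha>"
  shows "\<exists>\<phi>. \<forall>f. d (odb \<beta> f) = odb (gadd \<alpha> \<beta>) (\<phi> f)"
proof (intro exI allI)
  fix f
  have "d (odb \<beta> f) \<in> gcomp (gadd \<alpha> \<beta>)" "d (odb \<beta> f) \<in> J1"
    using DerJ0_shift[OF d] EvenDerJ_J1[OF DerJ0_even[OF d]] piece_in_degree by blast+
  then show "d (odb \<beta> f) = odb (gadd \<alpha> \<beta>) (odc (gadd \<alpha> \<beta>) (d (odb \<beta> f)))"
    by (rule odd_piece)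
qed

lemma EvenDerJ_coordinates:
  assumes "d \<in> EvenDerJ emb \<delta>"
  shows "d e = d (zE (sc e)) + (d (w1E (w1c e)) + (d (w2E (w2c e)) + (d (w3E (w3c e))
    + (d (xE (xc e)) + (d (x1E (x1c e)) + (d (x2E (x2c e)) + d (x3E (x3c e))))))))"
  by (subst jck_coordinates[of e]) (simp only: EvenDerJ_add[OF assms])

lemma spanF_induct [consumes 1, case_names zero step]:
  assumes "d \<in> spanF emb S" and "P (\<lambda>c. 0)"
    and "\<And>d' g k. P d' \<Longrightarrow> g \<in> S \<Longrightarrow> P (\<lambda>c. d' c + zmul (emb k) (g c))"
  shows "P d"
proof -
  obtain n :: nat and k g where d: "d = (\<lambda>c. \<Sum>i<n. zmul (emb (k i)) (g i c))" and g: "\<forall>i<n. g i \<in> S"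
    using assms(1) unfolding spanF_def by blast
  have "m \<le> n \<Longrightarrow> P (\<lambda>c. \<Sum>i<m. zmul (emb (k i)) (g i c))" for m
  proof (induction m)
    case 0
    then show ?case using assms(2) by simp
  next
    case (Suc m)
    then show ?case using assms(3)[where g = "g m" and k = "k m"] g by simp
  qed
  then show ?thesis using d by simp
qed

lemma spanF_mono: "S \<subseteq> S' \<Longrightarrow> spanF emb S \<subseteq> spanF emb S'"
  unfolding spanF_def by blast

section \<open>Characters of Z_2^2 and the twist automorphisms\<close>

text \<open>chi psi is the character of Z_2^2 indexed by psi, with values +1 and -1 in Z;
  twist psi multiplies J^beta by chi psi beta.\<close>
definition chi :: "bool \<times> bool \<Rightarrow> bool \<times> bool \<Rightarrow> 'z::comm_ring_1" where
  "chi \<psi> \<gamma> = (if (fst \<psi> \<and> fst \<gamma>) = (snd \<psi> \<and> snd \<gamma>) then 1 else -1)"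

definition twist :: "bool \<times> bool \<Rightarrow> 'z::comm_ring_1 jck \<Rightarrow> 'z jck" where
  "twist \<psi> e = JE (sc e) (chi \<psi> (True,False) * w1c e) (chi \<psi> (False,True) * w2c e)
     (chi \<psi> (True,True) * w3c e) (xc e) (chi \<psi> (True,False) * x1c e)
     (chi \<psi> (False,True) * x2c e) (chi \<psi> (True,True) * x3c e)"

lemma twist_twist [simp]: "twist \<psi> (twist \<psi> u) = u"
  by (cases \<psi> rule: degree_cases; cases u) (simp_all add: twist_def chi_def)

lemma twist_add: "twist \<psi> (u + v) = twist \<psi> u + twist \<psi> v"
  and twist_zmul: "twist \<psi> (zmul z u) = zmul z (twist \<psi> u)"
  by (simp_all add: twist_def jck_ops algebra_simps)

lemma twist_J0: "u \<in> J0 \<Longrightarrow> twist \<psi> u \<in> J0"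
  and twist_J1: "u \<in> J1 \<Longrightarrow> twist \<psi> u \<in> J1"
  by (simp_all add: twist_def J0_def J1_def)

lemma twist_gcomp: "u \<in> gcomp \<beta> \<Longrightarrow> twist \<psi> u = zmul (chi \<psi> \<beta>) u"
  by (cases \<beta> rule: degree_cases; cases \<psi> rule: degree_cases; cases u)
    (auto simp: twist_def zmul_def chi_def)

definition character_sum :: "bool \<times> bool \<Rightarrow> (bool \<times> bool \<Rightarrow> 'z::comm_ring_1 jck) \<Rightarrow> 'z jck" where
  "character_sum \<alpha> T = zmul (chi (False,False) \<alpha>) (T (False,False)) + zmul (chi (True,False) \<alpha>) (T (True,False))
     + zmul (chi (False,True) \<alpha>) (T (False,True)) + zmul (chi (True,True) \<alpha>) (T (True,True))"

text \<open>Orthogonality of characters: averaging the twists of y of degree beta against the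
  character values at alpha retains only the part of y of degree alpha + beta.\<close>
lemma character_sum_twists:
  "zmul q (character_sum \<alpha> (\<lambda>\<psi>. twist \<psi> (zmul (chi \<psi> \<beta>) y))) \<in> gcomp (gadd \<alpha> \<beta>)"
  by (cases \<alpha> rule: degree_cases; cases \<beta> rule: degree_cases)
    (simp_all add: character_sum_def chi_def twist_def gadd_def jck_ops)

lemma character_sum_total:
  "character_sum (False,False) T + character_sum (True,False) T + character_sum (False,True) T
     + character_sum (True,True) T = zmul 4 (T (False,False))"
  by (simp add: character_sum_def chi_def jck_ops algebra_simps)

locale cheng_kac =
  fixes emb :: "'f::field \<Rightarrow> 'z::comm_ring_1" and \<delta> :: "'z \<Rightarrow> 'z"
  assumes char: "(2::'f) \<noteq> 0"
    and emb_one: "emb 1 = 1"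
    and emb_add: "\<forall>a b. emb (a + b) = emb a + emb b"
    and emb_mult: "\<forall>a b. emb (a * b) = emb a * emb b"
    and der_add: "\<forall>a b. \<delta> (a + b) = \<delta> a + \<delta> b"
    and der_lin: "\<forall>k a. \<delta> (emb k * a) = emb k * \<delta> a"
    and der_leib: "\<forall>a b. \<delta> (a * b) = \<delta> a * b + a * \<delta> b"
    and nondeg: "\<forall>z. \<exists>(n::nat) f g. z = (\<Sum>i<n. f i * \<delta> (g i))"
begin

lemma delta_add [simp]: "\<delta> (a + b) = \<delta> a + \<delta> b"
  and delta_mult [simp]: "\<delta> (a * b) = \<delta> a * b + a * \<delta> b"
  using der_add der_leib by blast+

lemma delta_zero [simp]: "\<delta> 0 = 0"
  and delta_one [simp]: "\<delta> 1 = 0"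
  using delta_add[of 0 0] delta_mult[of 1 1] by simp_all

lemma delta_minus [simp]: "\<delta> (- a) = - \<delta> a"
  using delta_add[of a "- a"] by (simp add: add_eq_0_iff2)

lemma delta_diff [simp]: "\<delta> (a - b) = \<delta> a - \<delta> b"
  using delta_add[of a "- b"] by simp

lemma delta_numeral [simp]: "\<delta> (numeral n) = 0"
proof -
  have "\<delta> (of_nat m) = 0" for m by (induction m) simp_all
  then show ?thesis by (metis of_nat_numeral)
qed

lemma emb_plus: "emb (a + b) = emb a + emb b"
  and emb_times: "emb (a * b) = emb a * emb b"
  using emb_add emb_mult by blast+

lemma delta_emb [simp]: "\<delta> (emb k) = 0"
  using der_lin[rule_format, of k 1] by simp

lemma emb_inverse_two: "emb (inverse 2) * 2 = (1::'z)"
  using emb_times[of "inverse 2" 2] emb_plus[of 1 1] char emb_one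
  by (simp add: one_add_one)

lemma emb_inverse_four: "emb (inverse 4) * 4 = (1::'z)"
proof -
  have "emb (inverse 4) = emb (inverse 2) * emb (inverse (2::'f))"
    using emb_times[of "inverse 2" "inverse (2::'f)"] by simp
  then have "emb (inverse 4) * 4 = (emb (inverse 2) * 2) * (emb (inverse 2) * (2::'z))"
    by (simp add: algebra_simps)
  then show ?thesis by (simp only: emb_inverse_two mult_1)
qed

lemma cancel_two: "2 * (u::'z) = 0 \<Longrightarrow> u = 0"
  using emb_inverse_two by (metis mult.assoc mult.commute mult_1 mult_zero_right)

lemma halve: "2 * (emb (inverse 2) * u) = (u::'z)"
  using emb_inverse_two by (metis mult.assoc mult.commute mult_1)

text \<open>Z delta(Z) = Z makes delta a cancellable factor: this is where the hypothesis is used.\<close>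
lemma delta_cancel:
  assumes "\<And>z. u * \<delta> z = v * \<delta> z"
  shows "u = v"
proof -
  obtain n :: nat and f g where one: "(1::'z) = (\<Sum>i<n. f i * \<delta> (g i))"
    using nondeg by blast
  have "u = u * (\<Sum>i<n. f i * \<delta> (g i))" by (simp flip: one)
  also have "\<dots> = (\<Sum>i<n. f i * (u * \<delta> (g i)))" by (simp add: sum_distrib_left mult.left_commute)
  also have "\<dots> = (\<Sum>i<n. f i * (v * \<delta> (g i)))" using assms by simp
  also have "\<dots> = v * (\<Sum>i<n. f i * \<delta> (g i))" by (simp add: sum_distrib_left mult.left_commute)
  also have "\<dots> = v" by (simp flip: one)
  finally show ?thesis .
qed

lemma spanF_single: "g \<in> S \<Longrightarrow> g \<in> spanF emb S"
  unfolding spanF_def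
  by (rule CollectI, rule exI[of _ 1], rule exI[of _ "\<lambda>_. 1"], rule exI[of _ "\<lambda>_. g"])
    (simp add: zmul_def emb_one)

lemma spanF_family:
  fixes F :: "'z::comm_ring_1 \<Rightarrow> 'z jck \<Rightarrow> 'z jck"
  assumes zero: "F 0 = (\<lambda>c. 0)"
    and lin: "\<And>p q k. (\<lambda>c. F p c + zmul (emb k) (F q c)) = F (p + emb k * q)"
  shows "spanF emb (range F) = range F"
proof
  show "spanF emb (range F) \<subseteq> range F"
  proof
    fix d assume "d \<in> spanF emb (range F)"
    then show "d \<in> range F"
    proof (induction rule: spanF_induct)
      case zero
      then show ?case using assms(1) by (metis rangeI)
    next
      case (step d' g k)
      then show ?case using lin by auto
    qed
  qed
qed (auto intro: spanF_single)

lemma jmul_add_left: "jmul \<delta> (u + v) w = jmul \<delta> u w + jmul \<delta> v w"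
  and jmul_add_right: "jmul \<delta> u (v + w) = jmul \<delta> u v + jmul \<delta> u w"
  by (simp_all add: jmul_def jck_ops algebra_simps)

lemma jmul_const_left: "\<delta> z = 0 \<Longrightarrow> jmul \<delta> (zmul z u) w = zmul z (jmul \<delta> u w)"
  and jmul_const_right: "\<delta> z = 0 \<Longrightarrow> jmul \<delta> u (zmul z w) = zmul z (jmul \<delta> u w)"
  by (simp_all add: jmul_def jck_ops algebra_simps)

lemma twist_jmul: "twist \<psi> (jmul \<delta> u v) = jmul \<delta> (twist \<psi> u) (twist \<psi> v)"
  by (cases \<psi> rule: degree_cases) (simp_all add: twist_def chi_def jmul_def algebra_simps)

lemma Dop_even_left:
  assumes "a \<in> J0"
  shows "Dop \<delta> a b = (\<lambda>c. jmul \<delta> a (jmul \<delta> b c) - jmul \<delta> b (jmul \<delta> a c))"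
proof (cases "a \<in> J1")
  case True
  then have "a = 0" using assms by (cases a) (simp add: J0_def J1_def zero_jck_def)
  then show ?thesis by (intro ext) (simp add: Dop_def jmul_def zero_jck_def)
qed (simp add: Dop_def)

subsection \<open>Degree [0,0]: extensions of the even derivations of K\<close>

text \<open>check_pair mu a says that mu is an F-linear derivation of Z with [mu, delta] = 2 a delta,
  i.e. that check mu (with x |-> a x) is an even derivation of K = Z + Zx.\<close>
definition check_pair :: "('z \<Rightarrow> 'z) \<Rightarrow> 'z \<Rightarrow> bool" where
  "check_pair \<mu> a \<longleftrightarrow> (\<forall>x y. \<mu> (x + y) = \<mu> x + \<mu> y) \<and> (\<forall>k x. \<mu> (emb k * x) = emb k * \<mu> x)
     \<and> (\<forall>x y. \<mu> (x * y) = \<mu> x * y + x * \<mu> y) \<and> (\<forall>x. \<mu> (\<delta> x) = \<delta> (\<mu> x) + 2 * a * \<delta> x)"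

definition check_ext :: "('z \<Rightarrow> 'z) \<Rightarrow> 'z \<Rightarrow> 'z jck \<Rightarrow> 'z jck" where
  "check_ext \<mu> a e = JE (\<mu> (sc e)) (\<mu> (w1c e)) (\<mu> (w2c e)) (\<mu> (w3c e)) (\<mu> (xc e) + a * xc e)
     (\<mu> (x1c e) - a * x1c e) (\<mu> (x2c e) - a * x2c e) (\<mu> (x3c e) - a * x3c e)"

lemma check_pair_zero_one:
  assumes "check_pair \<mu> a"
  shows "\<mu> 0 = 0" and "\<mu> 1 = 0"
  using assms unfolding check_pair_def by (metis add_cancel_right_right mult_1 mult_1_right)+

lemma check_ext_DerJ0:
  assumes K: "check_pair \<mu> a"
  shows "check_ext \<mu> a \<in> DerJ0 emb \<delta> (False,False)"
proof -
  have add: "\<mu> (x + y) = \<mu> x + \<mu> y" and lin: "\<mu> (emb k * x) = emb k * \<mu> x"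
    and leib: "\<mu> (x * y) = \<mu> x * y + x * \<mu> y" and comm: "\<mu> (\<delta> x) = \<delta> (\<mu> x) + 2 * a * \<delta> x"
    for x y k using K unfolding check_pair_def by blast+
  have lin': "\<mu> (x * emb k) = emb k * \<mu> x" for x k using lin by (simp add: mult.commute)
  have zero: "\<mu> 0 = 0" using check_pair_zero_one[OF K] by simp
  have minus: "\<mu> (- x) = - \<mu> x" for x by (metis add add.right_inverse zero add_eq_0_iff2)
  have diff: "\<mu> (x - y) = \<mu> x - \<mu> y" for x y using add[of x "- y"] minus by simp
  show ?thesis
  proof (rule DerJ0I)
    show "check_ext \<mu> a (jmul \<delta> u v) = jmul \<delta> (check_ext \<mu> a u) v + jmul \<delta> u (check_ext \<mu> a v)" for u v
      unfolding check_ext_def jmul_def by (simp add: add leib comm minus diff jck_ops algebra_simps)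
    show "\<forall>u\<in>gcomp \<beta>. check_ext \<mu> a u \<in> gcomp (gadd (False,False) \<beta>)" for \<beta>
      by (cases \<beta> rule: degree_cases) (auto simp: gadd_def check_ext_def zero)
  qed (auto simp: check_ext_def jck_ops J0_def J1_def add lin' zero algebra_simps)
qed

lemma tildeD_check_ext: "\<mu> 0 = 0 \<Longrightarrow> \<mu> 1 = 0 \<Longrightarrow> tildeD (check_ext \<mu> a) = check_ext \<mu> a"
  unfolding tildeD_def check_ext_def xJ_def by (intro ext) (simp add: jck_ops Let_def)

lemma tildeD_checkK: "\<mu> 1 = 0 \<Longrightarrow> tildeD (checkK \<mu> a) = check_ext \<mu> a"
  unfolding tildeD_def check_ext_def xJ_def checkK_def by (intro ext) (simp add: jck_ops Let_def)

lemma restriction_to_K: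
  assumes add: "\<And>u v. u \<in> Kset \<Longrightarrow> v \<in> Kset \<Longrightarrow> d (u + v) = d u + d v"
    and lin: "\<And>k u. u \<in> Kset \<Longrightarrow> d (zmul (emb k) u) = zmul (emb k) (d u)"
    and leib: "\<And>u v. u \<in> Kset \<Longrightarrow> v \<in> Kset \<Longrightarrow> d (jmul \<delta> u v) = jmul \<delta> (d u) v + jmul \<delta> u (d v)"
    and on_Z: "\<And>f. d (zE f) = zE (\<mu> f)" and on_x: "\<And>f. d (xE f) = xE (\<xi> f)"
  shows "check_pair \<mu> (\<xi> 1) \<and> (\<forall>f. \<xi> f = \<mu> f + \<xi> 1 * f)"
proof -
  have K: "zE f \<in> Kset" "xE f \<in> Kset" for f :: 'z by (simp_all add: Kset_def)
  have xi: "\<xi> f = \<mu> f + \<xi> 1 * f" for f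
    using leib[OF K(1)[of f] K(2)[of 1]] by (simp add: on_Z on_x jmul_def jck_ops algebra_simps)
  have "\<mu> (x + y) = \<mu> x + \<mu> y" for x y
    using add[OF K(1) K(1)] by (simp add: on_Z jck_ops)
  moreover have "\<mu> (emb k * x) = emb k * \<mu> x" for k x
    using lin[OF K(1)] by (simp add: on_Z jck_ops)
  moreover have "\<mu> (x * y) = \<mu> x * y + x * \<mu> y" for x y
    using leib[OF K(1) K(1)] by (simp add: on_Z jmul_def jck_ops algebra_simps)
  moreover have "\<mu> 1 = 0"
    using leib[OF K(1) K(1), of 1 1] by (simp add: on_Z jmul_def jck_ops)
  then have "\<mu> (\<delta> x) = \<delta> (\<mu> x) + 2 * \<xi> 1 * \<delta> x" for x
    using leib[OF K(2) K(2), of x 1] xi[of x] by (simp add: on_Z on_x jmul_def jck_ops algebra_simps)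
  ultimately show ?thesis using xi unfolding check_pair_def by blast
qed

lemma DerJ0_00_classification:
  assumes dd: "d \<in> DerJ0 emb \<delta> (False,False)"
  shows "\<exists>\<mu> a. check_pair \<mu> a \<and> d = check_ext \<mu> a"
proof -
  have E: "d \<in> EvenDerJ emb \<delta>" using dd by (rule DerJ0_even)
  note M = EvenDerJ_leibniz[OF E]
  obtain \<mu> where hS: "\<And>f. d (zE f) = zE (\<mu> f)"
    using DerJ0_even_piece[OF dd, of "(False,False)"] by (auto simp: gadd_def)
  obtain \<omega>1 where hW1: "\<And>f. d (w1E f) = w1E (\<omega>1 f)"
    using DerJ0_even_piece[OF dd, of "(True,False)"] by (auto simp: gadd_def)
  obtain \<omega>2 where hW2: "\<And>f. d (w2E f) = w2E (\<omega>2 f)"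
    using DerJ0_even_piece[OF dd, of "(False,True)"] by (auto simp: gadd_def)
  obtain \<omega>3 where hW3: "\<And>f. d (w3E f) = w3E (\<omega>3 f)"
    using DerJ0_even_piece[OF dd, of "(True,True)"] by (auto simp: gadd_def)
  obtain \<xi> where hX: "\<And>f. d (xE f) = xE (\<xi> f)"
    using DerJ0_odd_piece[OF dd, of "(False,False)"] by (auto simp: gadd_def)
  obtain \<chi>1 where hX1: "\<And>f. d (x1E f) = x1E (\<chi>1 f)"
    using DerJ0_odd_piece[OF dd, of "(True,False)"] by (auto simp: gadd_def)
  obtain \<chi>2 where hX2: "\<And>f. d (x2E f) = x2E (\<chi>2 f)"
    using DerJ0_odd_piece[OF dd, of "(False,True)"] by (auto simp: gadd_def)
  obtain \<chi>3 where hX3: "\<And>f. d (x3E f) = x3E (\<chi>3 f)"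
    using DerJ0_odd_piece[OF dd, of "(True,True)"] by (auto simp: gadd_def)
  note hs = hS hW1 hW2 hW3 hX hX1 hX2 hX3
  define a where "a = \<xi> 1"
  have K: "check_pair \<mu> a" and Xi: "\<And>f. \<xi> f = \<mu> f + a * f"
    using restriction_to_K[of d \<mu> \<xi>] EvenDerJ_add[OF E] EvenDerJ_zmul[OF E] M hS hX
    unfolding a_def by blast+
  have m1: "\<mu> 1 = 0" using check_pair_zero_one[OF K] by simp
  have mm1: "\<mu> (-1) = 0"
    using K check_pair_zero_one[OF K] unfolding check_pair_def by (metis add.right_inverse add_0)
  text \<open>w_i^2 = +-1 forces omega_i 1 = 0; then d(f w_i) = mu(f) w_i.\<close>
  have o1: "\<omega>1 1 = 0" using M[of "w1E 1" "w1E 1"] m1 cancel_two by (simp add: hs jmul_def jck_ops)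
  have o2: "\<omega>2 1 = 0" using M[of "w2E 1" "w2E 1"] m1 cancel_two by (simp add: hs jmul_def jck_ops)
  have o3: "\<omega>3 1 = 0" using M[of "w3E 1" "w3E 1"] mm1 cancel_two by (simp add: hs jmul_def jck_ops)
  have O: "\<omega>1 f = \<mu> f" "\<omega>2 f = \<mu> f" "\<omega>3 f = \<mu> f" for f
    using M[of "zE f" "w1E 1"] M[of "zE f" "w2E 1"] M[of "zE f" "w3E 1"] o1 o2 o3
    by (simp_all add: hs jmul_def jck_ops)
  text \<open>x_i x = w_i forces chi_i 1 = -a; then d(f x_i) = (mu(f) - a f) x_i.\<close>
  have c: "\<chi>1 1 = - a" "\<chi>2 1 = - a" "\<chi>3 1 = - a"
    using M[of "x1E 1" "xE 1"] M[of "x2E 1" "xE 1"] M[of "x3E 1" "xE 1"] o1 o2 o3 Xi[of 1] m1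
    by (simp_all add: hs jmul_def jck_ops add_eq_0_iff2)
  have C: "\<chi>1 f = \<mu> f - a * f" "\<chi>2 f = \<mu> f - a * f" "\<chi>3 f = \<mu> f - a * f" for f
    using M[of "zE f" "x1E 1"] M[of "zE f" "x2E 1"] M[of "zE f" "x3E 1"] c
    by (simp_all add: hs jmul_def jck_ops algebra_simps)
  have "d e = check_ext \<mu> a e" for e
    using EvenDerJ_coordinates[OF E, of e] by (simp add: hs O Xi C check_ext_def jck_ops)
  then show ?thesis using K by blast
qed

lemma DerJ0_00_DerK0:
  assumes d: "d \<in> DerJ0 emb \<delta> (False,False)"
  shows "d \<in> DerK0 emb \<delta>"
proof -
  have E: "d \<in> EvenDerJ emb \<delta>" using d by (rule DerJ0_even)
  have "u \<in> Kset \<Longrightarrow> d u \<in> Kset" for u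
    using DerJ0_shift[OF d, of u "(False,False)"] by (simp add: Kset_def gadd_def)
  then show ?thesis unfolding DerK0_def K0_def K1_def flin_def
    using EvenDerJ_J0[OF E] EvenDerJ_J1[OF E] EvenDerJ_add[OF E] EvenDerJ_zmul[OF E]
      EvenDerJ_leibniz[OF E] by blast
qed

lemma DerK0_classification:
  assumes dK: "d \<in> DerK0 emb \<delta>"
  shows "\<exists>\<mu> a. check_pair \<mu> a \<and> tildeD d = check_ext \<mu> a"
proof -
  have K0: "u \<in> K0 \<Longrightarrow> d u \<in> K0" and K1: "u \<in> K1 \<Longrightarrow> d u \<in> K1"
    and add: "u \<in> Kset \<Longrightarrow> v \<in> Kset \<Longrightarrow> d (u + v) = d u + d v"
    and lin: "u \<in> Kset \<Longrightarrow> d (zmul (emb k) u) = zmul (emb k) (d u)"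
    and leib: "u \<in> Kset \<Longrightarrow> v \<in> Kset \<Longrightarrow> d (jmul \<delta> u v) = jmul \<delta> (d u) v + jmul \<delta> u (d v)"
    for u v k using dK unfolding DerK0_def flin_def by blast+
  define \<mu> where "\<mu> f = sc (d (zE f))" for f
  define \<xi> where "\<xi> f = xc (d (xE f))" for f
  have hS: "d (zE f) = zE (\<mu> f)" for f
    using even_piece[of "d (zE f)" "(False,False)"] K0[of "zE f"]
    unfolding \<mu>_def by (simp add: K0_def Kset_def J0_def)
  have hX: "d (xE f) = xE (\<xi> f)" for f
    using odd_piece[of "d (xE f)" "(False,False)"] K1[of "xE f"]
    unfolding \<xi>_def by (simp add: K1_def Kset_def J1_def)
  define a where "a = \<xi> 1"
  have K: "check_pair \<mu> a" and Xi: "\<And>f. \<xi> f = \<mu> f + a * f"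
    using restriction_to_K[of d \<mu> \<xi>] add lin leib hS hX unfolding a_def by blast+
  have "tildeD d e = check_ext \<mu> a e" for e
  proof -
    have "d (JE (sc e) 0 0 0 (xc e) 0 0 0) = d (zE (sc e)) + d (xE (xc e))"
      using add[of "zE (sc e)" "xE (xc e)"] by (simp add: Kset_def jck_ops)
    then show ?thesis using check_pair_zero_one[OF K]
      unfolding tildeD_def check_ext_def Let_def xJ_def
      by (simp add: hS hX Xi jck_ops algebra_simps)
  qed
  then show ?thesis using K by blast
qed

lemma DerJ0_00_eq: "DerJ0 emb \<delta> (False, False) = tildeD ` DerK0 emb \<delta>"
proof (intro set_eqI iffI)
  fix d assume d: "d \<in> DerJ0 emb \<delta> (False, False)"
  then obtain \<mu> a where K: "check_pair \<mu> a" and "d = check_ext \<mu> a"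
    using DerJ0_00_classification by blast
  then have "tildeD d = d" using tildeD_check_ext check_pair_zero_one by blast
  then show "d \<in> tildeD ` DerK0 emb \<delta>" using DerJ0_00_DerK0[OF d] by (metis image_eqI)
next
  fix d assume "d \<in> tildeD ` DerK0 emb \<delta>"
  then obtain d' where "d' \<in> DerK0 emb \<delta>" and d: "d = tildeD d'" by blast
  then obtain \<mu> a where "check_pair \<mu> a" and "tildeD d' = check_ext \<mu> a"
    using DerK0_classification by blast
  then show "d \<in> DerJ0 emb \<delta> (False, False)" using check_ext_DerJ0 d by simp
qed

subsection \<open>Inner derivations of degree [0,0]\<close>

lemma xJ_homog: "homog xJ" "homog (zmul f xJ)" "xJ \<in> Kset" "zmul f xJ \<in> Kset"
  by (simp_all add: homog_def J1_def xJ_def zmul_def Kset_def)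

lemma Dop_x: "Dop \<delta> xJ (zmul h xJ) = check_ext (\<lambda>z. - (2 * h * \<delta> z)) (\<delta> h)"
  unfolding Dop_def xJ_def zmul_def J1_def
  by (intro ext) (simp add: jmul_def check_ext_def jck_ops algebra_simps)

lemma span_Dx:
  "spanF emb {Dop \<delta> xJ (zmul f xJ) | f. True} = range (\<lambda>G. check_ext (\<lambda>z. - (2 * G * \<delta> z)) (\<delta> G))"
proof -
  have "{Dop \<delta> xJ (zmul f xJ) | f. True} = range (\<lambda>G. check_ext (\<lambda>z. - (2 * G * \<delta> z)) (\<delta> G))"
    by (auto simp: Dop_x)
  moreover have "spanF emb (range (\<lambda>G. check_ext (\<lambda>z. - (2 * G * \<delta> z)) (\<delta> G)))
      = range (\<lambda>G. check_ext (\<lambda>z. - (2 * G * \<delta> z)) (\<delta> G))"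
    by (rule spanF_family) (auto simp: check_ext_def jck_ops algebra_simps)
  ultimately show ?thesis by simp
qed

lemma check_ext_Dx_DerJ0: "check_ext (\<lambda>z. - (2 * G * \<delta> z)) (\<delta> G) \<in> DerJ0 emb \<delta> (False,False)"
  by (rule check_ext_DerJ0) (simp add: check_pair_def algebra_simps)

lemma Dop_on_Z:
  assumes "homog a" and "homog b"
  shows "\<exists>c. \<forall>f. sc (Dop \<delta> a b (zE f)) = c * \<delta> f"
proof (cases "a \<in> J1 \<and> b \<in> J1")
  case True
  then have "\<forall>f. sc (Dop \<delta> a b (zE f)) = (- (2 * xc a * xc b)) * \<delta> f"
    by (simp add: Dop_def jmul_def J1_def jck_ops algebra_simps)
  then show ?thesis by blast
next
  case False
  then have "a \<in> J0 \<or> b \<in> J0" using assms unfolding homog_def by blast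
  then have "\<forall>f. sc (Dop \<delta> a b (zE f)) = 0 * \<delta> f"
    using False by (cases a; cases b) (auto simp: Dop_def jmul_def J0_def jck_ops algebra_simps)
  then show ?thesis by blast
qed

lemma InderJ_on_Z:
  assumes "d \<in> InderJ emb \<delta>"
  shows "\<exists>c. \<forall>f. sc (d (zE f)) = c * \<delta> f"
  using assms unfolding InderJ_def
proof (induction rule: spanF_induct)
  case zero
  show ?case by (rule exI[of _ 0]) (simp add: jck_ops)
next
  case (step d' g k)
  then obtain c c' where "\<forall>f. sc (d' (zE f)) = c * \<delta> f" and "\<forall>f. sc (g (zE f)) = c' * \<delta> f"
    using Dop_on_Z by blast
  then have "\<forall>f. sc (d' (zE f) + zmul (emb k) (g (zE f))) = (c + emb k * c') * \<delta> f"
    by (simp add: jck_ops algebra_simps)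
  then show ?case by blast
qed

text \<open>If check_ext mu a is inner, i.e. mu = c delta, then [mu, delta] = 2 a delta and
  Z delta(Z) = Z give c = -2G and a = delta G for G = -c/2: it is D(x, G x).\<close>
lemma check_ext_multiple_of_delta:
  assumes mu: "\<And>f. \<mu> f = c * \<delta> f" and comm: "\<And>x. \<mu> (\<delta> x) = \<delta> (\<mu> x) + 2 * a * \<delta> x"
  shows "\<exists>G. check_ext \<mu> a = check_ext (\<lambda>z. - (2 * G * \<delta> z)) (\<delta> G)"
proof -
  have "(\<delta> c + 2 * a) * \<delta> x = 0 * \<delta> x" for x
    using comm[of x] by (simp add: mu algebra_simps)
  then have a: "2 * a = - \<delta> c" using delta_cancel by (metis add_eq_0_iff2 add.commute)
  define G where "G = emb (inverse 2) * - c"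
  have c: "c = - (2 * G)" unfolding G_def using halve[of "- c"] by simp
  have "2 * (a - \<delta> G) = 0" using a c by (simp add: algebra_simps)
  then have "a = \<delta> G" using cancel_two[of "a - \<delta> G"] by simp
  moreover have "\<mu> = (\<lambda>z. - (2 * G * \<delta> z))" using mu c by (intro ext) simp
  ultimately show ?thesis by blast
qed

lemma InderJ_00_eq:
  "InderJ emb \<delta> \<inter> DerJ0 emb \<delta> (False, False) = spanF emb {Dop \<delta> xJ (zmul f xJ) | f. True}"
proof (intro set_eqI iffI)
  fix d assume "d \<in> InderJ emb \<delta> \<inter> DerJ0 emb \<delta> (False, False)"
  then have dI: "d \<in> InderJ emb \<delta>" and d: "d \<in> DerJ0 emb \<delta> (False, False)" by auto
  obtain \<mu> a where K: "check_pair \<mu> a" and dT: "d = check_ext \<mu> a"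
    using DerJ0_00_classification[OF d] by blast
  obtain c where "\<forall>f. sc (d (zE f)) = c * \<delta> f" using InderJ_on_Z[OF dI] by blast
  then have "\<And>f. \<mu> f = c * \<delta> f" by (simp add: dT check_ext_def)
  then obtain G where "check_ext \<mu> a = check_ext (\<lambda>z. - (2 * G * \<delta> z)) (\<delta> G)"
    using check_ext_multiple_of_delta K unfolding check_pair_def by blast
  then show "d \<in> spanF emb {Dop \<delta> xJ (zmul f xJ) | f. True}" unfolding span_Dx dT by blast
next
  fix d assume d: "d \<in> spanF emb {Dop \<delta> xJ (zmul f xJ) | f. True}"
  then have "d \<in> DerJ0 emb \<delta> (False, False)" using check_ext_Dx_DerJ0 unfolding span_Dx by blast
  moreover have "{Dop \<delta> xJ (zmul f xJ) | f. True} \<subseteq> {Dop \<delta> a b |a b. homog a \<and> homog b}"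
    using xJ_homog by blast
  then have "d \<in> InderJ emb \<delta>" using d spanF_mono unfolding InderJ_def by blast
  ultimately show "d \<in> InderJ emb \<delta> \<inter> DerJ0 emb \<delta> (False, False)" by blast
qed

lemma span_Dx_InderK0: "spanF emb {Dop \<delta> xJ (zmul f xJ) | f. True} = tildeD ` InderK0 emb \<delta>"
proof (intro set_eqI iffI)
  fix d assume d: "d \<in> spanF emb {Dop \<delta> xJ (zmul f xJ) | f. True}"
  then obtain G where dG: "d = check_ext (\<lambda>z. - (2 * G * \<delta> z)) (\<delta> G)" unfolding span_Dx by blast
  have "{Dop \<delta> xJ (zmul f xJ) | f. True} \<subseteq> {Dop \<delta> a b |a b. a \<in> Kset \<and> b \<in> Kset \<and> homog a \<and> homog b}"
    using xJ_homog by blast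
  then have "d \<in> spanF emb {Dop \<delta> a b |a b. a \<in> Kset \<and> b \<in> Kset \<and> homog a \<and> homog b}"
    using d spanF_mono by blast
  moreover have "d \<in> DerK0 emb \<delta>" unfolding dG by (rule DerJ0_00_DerK0[OF check_ext_Dx_DerJ0])
  ultimately have "d \<in> InderK0 emb \<delta>" unfolding InderK0_def by blast
  moreover have "tildeD d = d" unfolding dG by (rule tildeD_check_ext) simp_all
  ultimately show "d \<in> tildeD ` InderK0 emb \<delta>" by (metis image_eqI)
next
  fix d assume "d \<in> tildeD ` InderK0 emb \<delta>"
  then obtain d' where d': "d' \<in> InderK0 emb \<delta>" and d: "d = tildeD d'" by blast
  have "{Dop \<delta> a b |a b. a \<in> Kset \<and> b \<in> Kset \<and> homog a \<and> homog b} \<subseteq> {Dop \<delta> a b |a b. homog a \<and> homog b}"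
    by blast
  then have dI: "d' \<in> InderJ emb \<delta>" using d' spanF_mono unfolding InderK0_def InderJ_def by blast
  have "d' \<in> DerK0 emb \<delta>" using d' unfolding InderK0_def by blast
  then obtain \<mu> a where K: "check_pair \<mu> a" and dT: "tildeD d' = check_ext \<mu> a"
    using DerK0_classification by blast
  have "sc (d' (zE f)) = \<mu> f" for f
    using arg_cong[OF dT, of "\<lambda>D. sc (D (zE f))"] by (simp add: tildeD_def check_ext_def Let_def jck_ops)
  moreover obtain c where "\<forall>f. sc (d' (zE f)) = c * \<delta> f" using InderJ_on_Z[OF dI] by blast
  ultimately have "\<And>f. \<mu> f = c * \<delta> f" by simp
  then obtain G where "check_ext \<mu> a = check_ext (\<lambda>z. - (2 * G * \<delta> z)) (\<delta> G)"
    using check_ext_multiple_of_delta K unfolding check_pair_def by blast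
  then show "d \<in> spanF emb {Dop \<delta> xJ (zmul f xJ) | f. True}" unfolding span_Dx d dT by blast
qed

lemma span_Dx_checkK:
  "spanF emb {Dop \<delta> xJ (zmul f xJ) | f. True} =
     {tildeD (checkK \<mu> a) | \<mu> a. (\<exists>f. \<mu> = (\<lambda>z. f * \<delta> z)) \<and> (\<forall>z. \<mu> (\<delta> z) - \<delta> (\<mu> z) = 2 * a * \<delta> z)}"
proof (intro set_eqI iffI)
  fix d assume "d \<in> spanF emb {Dop \<delta> xJ (zmul f xJ) | f. True}"
  then obtain G where dG: "d = check_ext (\<lambda>z. - (2 * G) * \<delta> z) (\<delta> G)" unfolding span_Dx by auto
  then have "d = tildeD (checkK (\<lambda>z. - (2 * G) * \<delta> z) (\<delta> G))" by (simp add: tildeD_checkK)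
  moreover have "\<forall>z. - (2 * G) * \<delta> (\<delta> z) - \<delta> (- (2 * G) * \<delta> z) = 2 * \<delta> G * \<delta> z"
    by (simp add: algebra_simps)
  ultimately show "d \<in> {tildeD (checkK \<mu> a) | \<mu> a. (\<exists>f. \<mu> = (\<lambda>z. f * \<delta> z))
      \<and> (\<forall>z. \<mu> (\<delta> z) - \<delta> (\<mu> z) = 2 * a * \<delta> z)}" by blast
next
  fix d assume "d \<in> {tildeD (checkK \<mu> a) | \<mu> a. (\<exists>f. \<mu> = (\<lambda>z. f * \<delta> z))
      \<and> (\<forall>z. \<mu> (\<delta> z) - \<delta> (\<mu> z) = 2 * a * \<delta> z)}"
  then obtain c a where d: "d = tildeD (checkK (\<lambda>z. c * \<delta> z) a)"
    and comm: "\<forall>z. c * \<delta> (\<delta> z) - \<delta> (c * \<delta> z) = 2 * a * \<delta> z" by auto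
  have "c * \<delta> (\<delta> x) = \<delta> (c * \<delta> x) + 2 * a * \<delta> x" for x
    using comm[rule_format, of x] by (simp add: algebra_simps neg_eq_iff_add_eq_0)
  then have "\<exists>G. check_ext (\<lambda>z. c * \<delta> z) a = check_ext (\<lambda>z. - (2 * G * \<delta> z)) (\<delta> G)"
    by (intro check_ext_multiple_of_delta) simp_all
  then show "d \<in> spanF emb {Dop \<delta> xJ (zmul f xJ) | f. True}"
    unfolding span_Dx d by (auto simp: tildeD_checkK)
qed

subsection \<open>The degrees [1,0], [0,1] and [1,1]: the inner derivations D(w_i, Z w_j)\<close>

text \<open>der10 p = D(w_2, p w_3), der01 p = D(w_3, p w_1), der11 p = D(w_1, p w_2).\<close>
definition der10 :: "'z \<Rightarrow> 'z jck \<Rightarrow> 'z jck" where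
  "der10 p e = JE 0 0 (- (p * w3c e)) (- (p * w2c e)) 0 (\<delta> p * xc e) (- (p * x3c e)) (- (p * x2c e))"

definition der01 :: "'z \<Rightarrow> 'z jck \<Rightarrow> 'z jck" where
  "der01 p e = JE 0 (p * w3c e) 0 (p * w1c e) 0 (p * x3c e) (\<delta> p * xc e) (p * x1c e)"

definition der11 :: "'z \<Rightarrow> 'z jck \<Rightarrow> 'z jck" where
  "der11 p e = JE 0 (p * w2c e) (- (p * w1c e)) 0 0 (p * x2c e) (- (p * x1c e)) (- (\<delta> p * xc e))"

lemma w_homog: "w1J \<in> J0" "w2J \<in> J0" "w3J \<in> J0" "homog w1J" "homog w2J" "homog w3J"
    "homog (zmul f w1J)" "homog (zmul f w2J)" "homog (zmul f w3J)"
  by (simp_all add: homog_def J0_def w1J_def w2J_def w3J_def zmul_def)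

lemma Dop_w2_w3: "Dop \<delta> w2J (zmul p w3J) = der10 p"
  using Dop_even_left[OF w_homog(2), of "zmul p w3J"]
  by (simp add: fun_eq_iff jmul_def der10_def w2J_def w3J_def jck_ops algebra_simps)

lemma Dop_w3_w1: "Dop \<delta> w3J (zmul p w1J) = der01 p"
  using Dop_even_left[OF w_homog(3), of "zmul p w1J"]
  by (simp add: fun_eq_iff jmul_def der01_def w3J_def w1J_def jck_ops algebra_simps)

lemma Dop_w1_w2: "Dop \<delta> w1J (zmul p w2J) = der11 p"
  using Dop_even_left[OF w_homog(1), of "zmul p w2J"]
  by (simp add: fun_eq_iff jmul_def der11_def w1J_def w2J_def jck_ops algebra_simps)

lemma der10_DerJ0: "der10 p \<in> DerJ0 emb \<delta> (True,False)"
proof (rule DerJ0I)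
  show "\<forall>u\<in>gcomp \<beta>. der10 p u \<in> gcomp (gadd (True,False) \<beta>)" for \<beta>
    by (cases \<beta> rule: degree_cases) (auto simp: gadd_def der10_def)
qed (auto simp: der10_def jmul_def J0_def J1_def jck_ops algebra_simps)

lemma der01_DerJ0: "der01 p \<in> DerJ0 emb \<delta> (False,True)"
proof (rule DerJ0I)
  show "\<forall>u\<in>gcomp \<beta>. der01 p u \<in> gcomp (gadd (False,True) \<beta>)" for \<beta>
    by (cases \<beta> rule: degree_cases) (auto simp: gadd_def der01_def)
qed (auto simp: der01_def jmul_def J0_def J1_def jck_ops algebra_simps)

lemma der11_DerJ0: "der11 p \<in> DerJ0 emb \<delta> (True,True)"
proof (rule DerJ0I)
  show "\<forall>u\<in>gcomp \<beta>. der11 p u \<in> gcomp (gadd (True,True) \<beta>)" for \<beta>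
    by (cases \<beta> rule: degree_cases) (auto simp: gadd_def der11_def)
qed (auto simp: der11_def jmul_def J0_def J1_def jck_ops algebra_simps)

text \<open>Classification in degree [1,0]: the Leibniz rule on products of basis vectors forces
  d to vanish on Z, w_1, x_1 and to be determined by p = the w_3-coefficient of d(w_2).\<close>
lemma DerJ0_10_classification:
  assumes dd: "d \<in> DerJ0 emb \<delta> (True,False)"
  shows "\<exists>q. d = der10 q"
proof -
  have E: "d \<in> EvenDerJ emb \<delta>" using dd by (rule DerJ0_even)
  note M = EvenDerJ_leibniz[OF E] and Z = EvenDerJ_zero[OF E]
  obtain \<phi> where hS: "\<And>f. d (zE f) = w1E (\<phi> f)"
    using DerJ0_even_piece[OF dd, of "(False,False)"] by (auto simp: gadd_def)
  obtain \<omega>1 where hW1: "\<And>f. d (w1E f) = zE (\<omega>1 f)"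
    using DerJ0_even_piece[OF dd, of "(True,False)"] by (auto simp: gadd_def)
  obtain \<omega>2 where hW2: "\<And>f. d (w2E f) = w3E (\<omega>2 f)"
    using DerJ0_even_piece[OF dd, of "(False,True)"] by (auto simp: gadd_def)
  obtain \<omega>3 where hW3: "\<And>f. d (w3E f) = w2E (\<omega>3 f)"
    using DerJ0_even_piece[OF dd, of "(True,True)"] by (auto simp: gadd_def)
  obtain \<xi> where hX: "\<And>f. d (xE f) = x1E (\<xi> f)"
    using DerJ0_odd_piece[OF dd, of "(False,False)"] by (auto simp: gadd_def)
  obtain \<chi>1 where hX1: "\<And>f. d (x1E f) = xE (\<chi>1 f)"
    using DerJ0_odd_piece[OF dd, of "(True,False)"] by (auto simp: gadd_def)
  obtain \<chi>2 where hX2: "\<And>f. d (x2E f) = x3E (\<chi>2 f)"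
    using DerJ0_odd_piece[OF dd, of "(False,True)"] by (auto simp: gadd_def)
  obtain \<chi>3 where hX3: "\<And>f. d (x3E f) = x2E (\<chi>3 f)"
    using DerJ0_odd_piece[OF dd, of "(True,True)"] by (auto simp: gadd_def)
  note hs = hS hW1 hW2 hW3 hX hX1 hX2 hX3
  have o1: "\<omega>1 1 = 0" using M[of "w2E 1" "w1E 1"] Z by (simp add: hs jmul_def jck_ops)
  have c1: "\<chi>1 1 = 0" using M[of "w2E 1" "x3E 1"] by (simp add: hs jmul_def jck_ops)
  have O1: "\<omega>1 f = \<phi> f" for f using M[of "zE f" "w1E 1"] o1 by (simp add: hs jmul_def jck_ops)
  have C1: "\<chi>1 f = 0" for f using M[of "zE f" "x1E 1"] c1 by (simp add: hs jmul_def jck_ops)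
  have ph: "\<phi> f = 0" for f using M[of "w1E f" "xE 1"] C1 O1 by (simp add: hs jmul_def jck_ops)
  define p where "p = \<omega>2 1"
  have xi1: "\<xi> 1 = - \<delta> p" using M[of "w2E 1" "xE 1"] Z unfolding p_def
    by (simp add: hs jmul_def jck_ops eq_neg_iff_add_eq_0 add.commute)
  have o3: "\<omega>3 1 = p" using M[of "w2E 1" "w3E 1"] Z unfolding p_def by (simp add: hs jmul_def jck_ops)
  have c2: "\<chi>2 1 = p" using M[of "w3E 1" "x1E 1"] c1 o3 by (simp add: hs jmul_def jck_ops)
  have c3: "\<chi>3 1 = p" using M[of "w2E 1" "x1E 1"] c1 unfolding p_def by (simp add: hs jmul_def jck_ops)
  have Xi: "\<xi> f = - (\<delta> p * f)" for f using M[of "zE f" "xE 1"] ph xi1 by (simp add: hs jmul_def jck_ops)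
  have O: "\<omega>2 f = p * f" "\<omega>3 f = p * f" for f
    using M[of "zE f" "w2E 1"] M[of "zE f" "w3E 1"] ph o3 unfolding p_def
    by (simp_all add: hs jmul_def jck_ops)
  have C: "\<chi>2 f = p * f" "\<chi>3 f = p * f" for f
    using M[of "zE f" "x2E 1"] M[of "zE f" "x3E 1"] ph c2 c3 by (simp_all add: hs jmul_def jck_ops)
  have "d e = der10 (- p) e" for e
    using EvenDerJ_coordinates[OF E, of e]
    by (simp add: hs ph O1 O Xi C1 C der10_def jck_ops algebra_simps)
  then show ?thesis by blast
qed

lemma DerJ0_01_classification:
  assumes dd: "d \<in> DerJ0 emb \<delta> (False,True)"
  shows "\<exists>q. d = der01 q"
proof -
  have E: "d \<in> EvenDerJ emb \<delta>" using dd by (rule DerJ0_even)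
  note M = EvenDerJ_leibniz[OF E] and Z = EvenDerJ_zero[OF E]
  obtain \<phi> where hS: "\<And>f. d (zE f) = w2E (\<phi> f)"
    using DerJ0_even_piece[OF dd, of "(False,False)"] by (auto simp: gadd_def)
  obtain \<omega>1 where hW1: "\<And>f. d (w1E f) = w3E (\<omega>1 f)"
    using DerJ0_even_piece[OF dd, of "(True,False)"] by (auto simp: gadd_def)
  obtain \<omega>2 where hW2: "\<And>f. d (w2E f) = zE (\<omega>2 f)"
    using DerJ0_even_piece[OF dd, of "(False,True)"] by (auto simp: gadd_def)
  obtain \<omega>3 where hW3: "\<And>f. d (w3E f) = w1E (\<omega>3 f)"
    using DerJ0_even_piece[OF dd, of "(True,True)"] by (auto simp: gadd_def)
  obtain \<xi> where hX: "\<And>f. d (xE f) = x2E (\<xi> f)"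
    using DerJ0_odd_piece[OF dd, of "(False,False)"] by (auto simp: gadd_def)
  obtain \<chi>1 where hX1: "\<And>f. d (x1E f) = x3E (\<chi>1 f)"
    using DerJ0_odd_piece[OF dd, of "(True,False)"] by (auto simp: gadd_def)
  obtain \<chi>2 where hX2: "\<And>f. d (x2E f) = xE (\<chi>2 f)"
    using DerJ0_odd_piece[OF dd, of "(False,True)"] by (auto simp: gadd_def)
  obtain \<chi>3 where hX3: "\<And>f. d (x3E f) = x1E (\<chi>3 f)"
    using DerJ0_odd_piece[OF dd, of "(True,True)"] by (auto simp: gadd_def)
  note hs = hS hW1 hW2 hW3 hX hX1 hX2 hX3
  have o2: "\<omega>2 1 = 0" using M[of "w1E 1" "w2E 1"] Z by (simp add: hs jmul_def jck_ops)
  have c2: "\<chi>2 1 = 0" using M[of "w3E 1" "x1E 1"] by (simp add: hs jmul_def jck_ops)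
  have O2: "\<omega>2 f = \<phi> f" for f using M[of "zE f" "w2E 1"] o2 by (simp add: hs jmul_def jck_ops)
  have C2: "\<chi>2 f = 0" for f using M[of "zE f" "x2E 1"] c2 by (simp add: hs jmul_def jck_ops)
  have ph: "\<phi> f = 0" for f using M[of "w2E f" "xE 1"] C2 O2 by (simp add: hs jmul_def jck_ops)
  define p where "p = \<omega>1 1"
  have xi1: "\<xi> 1 = \<delta> p" using M[of "w1E 1" "xE 1"] Z unfolding p_def by (simp add: hs jmul_def jck_ops)
  have o3: "\<omega>3 1 = p" using M[of "w1E 1" "w3E 1"] Z unfolding p_def by (simp add: hs jmul_def jck_ops)
  have Xi: "\<xi> f = \<delta> p * f" for f using M[of "zE f" "xE 1"] ph xi1 by (simp add: hs jmul_def jck_ops)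
  have O: "\<omega>1 f = p * f" "\<omega>3 f = p * f" for f
    using M[of "zE f" "w1E 1"] M[of "zE f" "w3E 1"] ph o3 unfolding p_def
    by (simp_all add: hs jmul_def jck_ops)
  have C': "\<chi>1 f = \<chi>1 1 * f" "\<chi>3 f = \<chi>3 1 * f" for f
    using M[of "zE f" "x1E 1"] M[of "zE f" "x3E 1"] ph by (simp_all add: hs jmul_def jck_ops)
  have c1: "\<chi>1 1 = p" using M[of "w3E 1" "x2E 1"] C'(1)[of "-1"] c2 o3 by (simp add: hs jmul_def jck_ops)
  have c3: "\<chi>3 1 = p" using M[of "w2E 1" "x3E 1"] c1 o2 by (simp add: hs jmul_def jck_ops)
  have C: "\<chi>1 f = p * f" "\<chi>3 f = p * f" for f using C'[of f] c1 c3 by (simp_all add: mult.commute)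
  have "d e = der01 p e" for e
    using EvenDerJ_coordinates[OF E, of e]
    by (simp add: hs ph O2 O Xi C2 C der01_def jck_ops algebra_simps)
  then show ?thesis by blast
qed

lemma DerJ0_11_classification:
  assumes dd: "d \<in> DerJ0 emb \<delta> (True,True)"
  shows "\<exists>q. d = der11 q"
proof -
  have E: "d \<in> EvenDerJ emb \<delta>" using dd by (rule DerJ0_even)
  note M = EvenDerJ_leibniz[OF E] and Z = EvenDerJ_zero[OF E]
  obtain \<phi> where hS: "\<And>f. d (zE f) = w3E (\<phi> f)"
    using DerJ0_even_piece[OF dd, of "(False,False)"] by (auto simp: gadd_def)
  obtain \<omega>1 where hW1: "\<And>f. d (w1E f) = w2E (\<omega>1 f)"
    using DerJ0_even_piece[OF dd, of "(True,False)"] by (auto simp: gadd_def)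
  obtain \<omega>2 where hW2: "\<And>f. d (w2E f) = w1E (\<omega>2 f)"
    using DerJ0_even_piece[OF dd, of "(False,True)"] by (auto simp: gadd_def)
  obtain \<omega>3 where hW3: "\<And>f. d (w3E f) = zE (\<omega>3 f)"
    using DerJ0_even_piece[OF dd, of "(True,True)"] by (auto simp: gadd_def)
  obtain \<xi> where hX: "\<And>f. d (xE f) = x3E (\<xi> f)"
    using DerJ0_odd_piece[OF dd, of "(False,False)"] by (auto simp: gadd_def)
  obtain \<chi>1 where hX1: "\<And>f. d (x1E f) = x2E (\<chi>1 f)"
    using DerJ0_odd_piece[OF dd, of "(True,False)"] by (auto simp: gadd_def)
  obtain \<chi>2 where hX2: "\<And>f. d (x2E f) = x1E (\<chi>2 f)"
    using DerJ0_odd_piece[OF dd, of "(False,True)"] by (auto simp: gadd_def)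
  obtain \<chi>3 where hX3: "\<And>f. d (x3E f) = xE (\<chi>3 f)"
    using DerJ0_odd_piece[OF dd, of "(True,True)"] by (auto simp: gadd_def)
  note hs = hS hW1 hW2 hW3 hX hX1 hX2 hX3
  have o3: "\<omega>3 1 = 0" using M[of "w1E 1" "w3E 1"] Z by (simp add: hs jmul_def jck_ops)
  have c3: "\<chi>3 1 = 0" using M[of "w2E 1" "x1E 1"] by (simp add: hs jmul_def jck_ops)
  have O3: "\<omega>3 f = - \<phi> f" for f using M[of "zE f" "w3E 1"] o3 by (simp add: hs jmul_def jck_ops)
  have C3: "\<chi>3 f = 0" for f using M[of "zE f" "x3E 1"] c3 by (simp add: hs jmul_def jck_ops)
  have ph: "\<phi> f = 0" for f using M[of "w3E f" "xE 1"] C3 O3 by (simp add: hs jmul_def jck_ops)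
  define p where "p = \<omega>2 1"
  have xi1: "\<xi> 1 = - \<delta> p" using M[of "w2E 1" "xE 1"] Z unfolding p_def
    by (simp add: hs jmul_def jck_ops eq_neg_iff_add_eq_0 add.commute)
  have o1: "\<omega>1 1 = - p" using M[of "w1E 1" "w2E 1"] Z unfolding p_def
    by (simp add: hs jmul_def jck_ops eq_neg_iff_add_eq_0 add.commute)
  have c1: "\<chi>1 1 = - p" using M[of "w2E 1" "x3E 1"] C3 unfolding p_def by (simp add: hs jmul_def jck_ops)
  have c2: "\<chi>2 1 = p" using M[of "w3E 1" "x1E 1"] c1 O3 ph by (simp add: hs jmul_def jck_ops)
  have Xi: "\<xi> f = - (\<delta> p * f)" for f using M[of "zE f" "xE 1"] ph xi1 by (simp add: hs jmul_def jck_ops)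
  have O: "\<omega>1 f = - (p * f)" "\<omega>2 f = p * f" for f
    using M[of "zE f" "w1E 1"] M[of "zE f" "w2E 1"] ph o1 unfolding p_def
    by (simp_all add: hs jmul_def jck_ops)
  have C: "\<chi>1 f = - (p * f)" "\<chi>2 f = p * f" for f
    using M[of "zE f" "x1E 1"] M[of "zE f" "x2E 1"] ph c1 c2 by (simp_all add: hs jmul_def jck_ops)
  have "d e = der11 p e" for e
    using EvenDerJ_coordinates[OF E, of e]
    by (simp add: hs ph O3 O Xi C3 C der11_def jck_ops algebra_simps)
  then show ?thesis by blast
qed

lemma DerJ0_10_eq: "DerJ0 emb \<delta> (True, False) = spanF emb {Dop \<delta> w2J (zmul f w3J) | f. True}"
proof -
  have "DerJ0 emb \<delta> (True, False) = range der10"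
    using DerJ0_10_classification der10_DerJ0 by blast
  moreover have "spanF emb (range der10) = range der10"
    by (rule spanF_family) (auto simp: der10_def jck_ops algebra_simps)
  ultimately show ?thesis by (simp add: Dop_w2_w3 full_SetCompr_eq)
qed

lemma DerJ0_01_eq: "DerJ0 emb \<delta> (False, True) = spanF emb {Dop \<delta> w3J (zmul f w1J) | f. True}"
proof -
  have "DerJ0 emb \<delta> (False, True) = range der01"
    using DerJ0_01_classification der01_DerJ0 by blast
  moreover have "spanF emb (range der01) = range der01"
    by (rule spanF_family) (auto simp: der01_def jck_ops algebra_simps)
  ultimately show ?thesis by (simp add: Dop_w3_w1 full_SetCompr_eq)
qed

lemma DerJ0_11_eq: "DerJ0 emb \<delta> (True, True) = spanF emb {Dop \<delta> w1J (zmul f w2J) | f. True}"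
proof -
  have "DerJ0 emb \<delta> (True, True) = range der11"
    using DerJ0_11_classification der11_DerJ0 by blast
  moreover have "spanF emb (range der11) = range der11"
    by (rule spanF_family) (auto simp: der11_def jck_ops algebra_simps)
  ultimately show ?thesis by (simp add: Dop_w1_w2 full_SetCompr_eq)
qed

lemma DerJ0_inner:
  assumes "\<alpha> \<noteq> (False, False)"
  shows "DerJ0 emb \<delta> \<alpha> \<subseteq> InderJ emb \<delta>"
proof -
  have "{Dop \<delta> w2J (zmul f w3J) | f. True} \<subseteq> {Dop \<delta> a b |a b. homog a \<and> homog b}"
    and "{Dop \<delta> w3J (zmul f w1J) | f. True} \<subseteq> {Dop \<delta> a b |a b. homog a \<and> homog b}"
    and "{Dop \<delta> w1J (zmul f w2J) | f. True} \<subseteq> {Dop \<delta> a b |a b. homog a \<and> homog b}"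
    using w_homog by blast+
  then show ?thesis using assms spanF_mono[of _ _ emb]
    unfolding InderJ_def
    by (cases \<alpha> rule: degree_cases) (simp_all only: DerJ0_10_eq DerJ0_01_eq DerJ0_11_eq, blast+)
qed

subsection \<open>Der(J)_0 is the direct sum of its homogeneous components\<close>

lemma EvenDerJ_sum:
  assumes "d1 \<in> EvenDerJ emb \<delta>" and "d2 \<in> EvenDerJ emb \<delta>"
  shows "(\<lambda>c. d1 c + d2 c) \<in> EvenDerJ emb \<delta>"
proof -
  have "u \<in> J0 \<Longrightarrow> v \<in> J0 \<Longrightarrow> u + v \<in> J0" "u \<in> J1 \<Longrightarrow> v \<in> J1 \<Longrightarrow> u + v \<in> J1"
    for u v :: "'z jck" by (simp_all add: J0_def J1_def jck_ops)
  then show ?thesis unfolding EvenDerJ_def flin_def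
    by (simp add: EvenDerJ_add[OF assms(1)] EvenDerJ_add[OF assms(2)] EvenDerJ_zmul[OF assms(1)]
      EvenDerJ_zmul[OF assms(2)] EvenDerJ_leibniz[OF assms(1)] EvenDerJ_leibniz[OF assms(2)]
      EvenDerJ_J0[OF assms(1)] EvenDerJ_J1[OF assms(1)] EvenDerJ_J0[OF assms(2)] EvenDerJ_J1[OF assms(2)]
      jmul_add_left jmul_add_right zmul_add algebra_simps)
qed

lemma EvenDerJ_const_mult:
  assumes "d \<in> EvenDerJ emb \<delta>" and "\<delta> z = 0"
  shows "(\<lambda>c. zmul z (d c)) \<in> EvenDerJ emb \<delta>"
proof -
  have "u \<in> J0 \<Longrightarrow> zmul z u \<in> J0" "u \<in> J1 \<Longrightarrow> zmul z u \<in> J1"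
    for u :: "'z jck" by (simp_all add: J0_def J1_def zmul_def)
  moreover have "zmul z (zmul w u) = zmul w (zmul z u)" for u :: "'z jck" and w
    by (simp add: zmul_zmul mult.commute)
  ultimately show ?thesis unfolding EvenDerJ_def flin_def
    by (simp add: EvenDerJ_add[OF assms(1)] EvenDerJ_zmul[OF assms(1)] EvenDerJ_leibniz[OF assms(1)]
      EvenDerJ_J0[OF assms(1)] EvenDerJ_J1[OF assms(1)] jmul_const_left[OF assms(2)]
      jmul_const_right[OF assms(2)] zmul_add)
qed

lemma EvenDerJ_twisted:
  assumes "d \<in> EvenDerJ emb \<delta>"
  shows "(\<lambda>c. twist \<psi> (d (twist \<psi> c))) \<in> EvenDerJ emb \<delta>"
  unfolding EvenDerJ_def flin_def
  by (simp add: EvenDerJ_add[OF assms] EvenDerJ_zmul[OF assms] EvenDerJ_leibniz[OF assms]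
    EvenDerJ_J0[OF assms] EvenDerJ_J1[OF assms] twist_add twist_zmul twist_jmul twist_J0 twist_J1)

lemma chi_emb: "chi \<psi> \<gamma> = emb (chi \<psi> \<gamma>)"
proof -
  have "emb 0 = 0" using emb_plus[of 0 0] by simp
  then have "emb (-1) = -1" using emb_plus[of "-1" 1] emb_one by (simp add: eq_neg_iff_add_eq_0)
  then show ?thesis unfolding chi_def by (simp only: if_distrib[of emb] emb_one)
qed

definition component :: "bool \<times> bool \<Rightarrow> ('z jck \<Rightarrow> 'z jck) \<Rightarrow> 'z jck \<Rightarrow> 'z jck" where
  "component \<alpha> d c = zmul (emb (inverse 4)) (character_sum \<alpha> (\<lambda>\<psi>. twist \<psi> (d (twist \<psi> c))))"

lemma component_EvenDerJ:
  assumes d: "d \<in> EvenDerJ emb \<delta>"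
  shows "component \<alpha> d \<in> EvenDerJ emb \<delta>"
proof -
  have twisted_term: "(\<lambda>c. zmul (chi \<psi> \<alpha>) (twist \<psi> (d (twist \<psi> c)))) \<in> EvenDerJ emb \<delta>" for \<psi>
    by (rule EvenDerJ_const_mult[OF EvenDerJ_twisted[OF d]]) (simp add: chi_def)
  show ?thesis unfolding component_def character_sum_def
    by (rule EvenDerJ_const_mult[OF _ delta_emb])
      (intro EvenDerJ_sum twisted_term)
qed

lemma component_DerJ0:
  assumes d: "d \<in> EvenDerJ emb \<delta>"
  shows "component \<alpha> d \<in> DerJ0 emb \<delta> \<alpha>"
proof -
  have "component \<alpha> d c \<in> gcomp (gadd \<alpha> \<beta>)" if c: "c \<in> gcomp \<beta>" for c \<beta>
  proof -
    have "twist \<psi> (d (twist \<psi> c)) = twist \<psi> (zmul (chi \<psi> \<beta>) (d c))" for \<psi>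
      using EvenDerJ_zmul[OF d, of "chi \<psi> \<beta>" c] by (simp add: twist_gcomp[OF c] flip: chi_emb)
    then show ?thesis unfolding component_def by (simp only: character_sum_twists)
  qed
  then show ?thesis using component_EvenDerJ[OF d] unfolding DerJ0_def by blast
qed

lemma components_sum:
  "component (False,False) d c + component (True,False) d c + component (False,True) d c
     + component (True,True) d c = d c"
proof -
  let ?T = "\<lambda>\<psi>. twist \<psi> (d (twist \<psi> c))"
  have "component (False,False) d c + component (True,False) d c + component (False,True) d c
     + component (True,True) d c = zmul (emb (inverse 4)) (character_sum (False,False) ?T
       + character_sum (True,False) ?T + character_sum (False,True) ?T + character_sum (True,True) ?T)"
    by (simp add: component_def zmul_add)
  also have "\<dots> = zmul (emb (inverse 4) * 4) (?T (False,False))"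
    by (simp only: character_sum_total zmul_zmul)
  also have "\<dots> = d c"
  proof -
    have "twist (False,False) u = u" for u :: "'z jck" by (cases u) (simp add: twist_def chi_def)
    then show ?thesis using emb_inverse_four by (cases "d c") (simp add: zmul_def)
  qed
  finally show ?thesis .
qed

lemma DerJ0_on_parts:
  assumes "d \<in> DerJ0 emb \<delta> \<alpha>"
  shows "d c = d (part (False,False) c) + d (part (True,False) c) + d (part (False,True) c)
    + d (part (True,True) c)"
  by (subst sum_of_parts[of c]) (simp only: EvenDerJ_add[OF DerJ0_even[OF assms]])

text \<open>Derivations of the four degrees are independent: applied to an element of degree
  beta they land in four distinct degrees.\<close>
lemma components_unique:
  assumes d: "d1 \<in> DerJ0 emb \<delta> (False,False)" "d2 \<in> DerJ0 emb \<delta> (True,False)"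
      "d3 \<in> DerJ0 emb \<delta> (False,True)" "d4 \<in> DerJ0 emb \<delta> (True,True)"
    and e: "e1 \<in> DerJ0 emb \<delta> (False,False)" "e2 \<in> DerJ0 emb \<delta> (True,False)"
      "e3 \<in> DerJ0 emb \<delta> (False,True)" "e4 \<in> DerJ0 emb \<delta> (True,True)"
    and eq: "\<And>c. d1 c + d2 c + d3 c + d4 c = e1 c + e2 c + e3 c + e4 c"
  shows "d1 = e1 \<and> d2 = e2 \<and> d3 = e3 \<and> d4 = e4"
proof -
  have on_degree: "d1 c = e1 c \<and> d2 c = e2 c \<and> d3 c = e3 c \<and> d4 c = e4 c" if c: "c \<in> gcomp \<beta>" for c \<beta>
  proof -
    have "(d1 c - e1 c) + (d2 c - e2 c) + (d3 c - e3 c) + (d4 c - e4 c) = 0"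
      using eq[of c] by (simp add: algebra_simps)
    then show ?thesis
      using degrees_independent[OF gcomp_diff gcomp_diff gcomp_diff gcomp_diff]
        DerJ0_shift[OF d(1) c] DerJ0_shift[OF e(1) c] DerJ0_shift[OF d(2) c] DerJ0_shift[OF e(2) c]
        DerJ0_shift[OF d(3) c] DerJ0_shift[OF e(3) c] DerJ0_shift[OF d(4) c] DerJ0_shift[OF e(4) c]
      by simp
  qed
  have "d1 c = e1 c \<and> d2 c = e2 c \<and> d3 c = e3 c \<and> d4 c = e4 c" for c
    using DerJ0_on_parts[OF d(1), of c] DerJ0_on_parts[OF d(2), of c] DerJ0_on_parts[OF d(3), of c]
      DerJ0_on_parts[OF d(4), of c] DerJ0_on_parts[OF e(1), of c] DerJ0_on_parts[OF e(2), of c]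
      DerJ0_on_parts[OF e(3), of c] DerJ0_on_parts[OF e(4), of c]
      on_degree[OF part_in, of "(False,False)" c] on_degree[OF part_in, of "(True,False)" c]
      on_degree[OF part_in, of "(False,True)" c] on_degree[OF part_in, of "(True,True)" c]
    by simp
  then show ?thesis by (simp add: fun_eq_iff)
qed

theorem EvenDerJ_decomposition:
  assumes E: "d \<in> EvenDerJ emb \<delta>"
  shows "\<exists>!(d1, d2, d3, d4). d1 \<in> DerJ0 emb \<delta> (False, False) \<and> d2 \<in> DerJ0 emb \<delta> (True, False)
         \<and> d3 \<in> DerJ0 emb \<delta> (False, True) \<and> d4 \<in> DerJ0 emb \<delta> (True, True)
         \<and> d = (\<lambda>c. d1 c + d2 c + d3 c + d4 c)"
proof (rule ex1I[of _ "(component (False,False) d, component (True,False) d,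
    component (False,True) d, component (True,True) d)"], goal_cases exists unique)
  case exists
  then show ?case using component_DerJ0[OF E] components_sum[of d] by (simp add: fun_eq_iff)
next
  case (unique y)
  then obtain e1 e2 e3 e4 where y: "y = (e1, e2, e3, e4)"
    and e: "e1 \<in> DerJ0 emb \<delta> (False, False)" "e2 \<in> DerJ0 emb \<delta> (True, False)"
      "e3 \<in> DerJ0 emb \<delta> (False, True)" "e4 \<in> DerJ0 emb \<delta> (True, True)"
    and de: "d = (\<lambda>c. e1 c + e2 c + e3 c + e4 c)" by (cases y) auto
  have "e1 = component (False,False) d \<and> e2 = component (True,False) d
      \<and> e3 = component (False,True) d \<and> e4 = component (True,True) d"
    by (rule components_unique[OF e component_DerJ0[OF E] component_DerJ0[OF E]
        component_DerJ0[OF E] component_DerJ0[OF E]]) (simp add: components_sum de)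
  then show ?case using y by simp
qed

end

theorem proposition4p1:
  fixes emb :: "'f::field \<Rightarrow> 'z::comm_ring_1" and \<delta> :: "'z \<Rightarrow> 'z"
  assumes char: "(2::'f) \<noteq> 0"
    and emb_one: "emb 1 = 1"
    and emb_add: "\<forall>a b. emb (a + b) = emb a + emb b"
    and emb_mult: "\<forall>a b. emb (a * b) = emb a * emb b"
    and der_add: "\<forall>a b. \<delta> (a + b) = \<delta> a + \<delta> b"
    and der_lin: "\<forall>k a. \<delta> (emb k * a) = emb k * \<delta> a"
    and der_leib: "\<forall>a b. \<delta> (a * b) = \<delta> a * b + a * \<delta> b"
    and nondeg: "\<forall>z. \<exists>(n::nat) f g. z = (\<Sum>i<n. f i * \<delta> (g i))"
  shows
    "DerJ0 emb \<delta> (False, False) = tildeD ` DerK0 emb \<delta>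
     \<and> InderJ emb \<delta> \<inter> DerJ0 emb \<delta> (False, False) = spanF emb {Dop \<delta> xJ (zmul f xJ) | f. True}
     \<and> spanF emb {Dop \<delta> xJ (zmul f xJ) | f. True} = tildeD ` InderK0 emb \<delta>
     \<and> tildeD ` InderK0 emb \<delta> =
         {tildeD (checkK \<mu> a) | \<mu> a. (\<exists>f. \<mu> = (\<lambda>z. f * \<delta> z))
                                      \<and> (\<forall>z. \<mu> (\<delta> z) - \<delta> (\<mu> z) = 2 * a * \<delta> z)}
     \<and> DerJ0 emb \<delta> (True, False) = spanF emb {Dop \<delta> w2J (zmul f w3J) | f. True}
     \<and> DerJ0 emb \<delta> (False, True) = spanF emb {Dop \<delta> w3J (zmul f w1J) | f. True}
     \<and> DerJ0 emb \<delta> (True, True) = spanF emb {Dop \<delta> w1J (zmul f w2J) | f. True}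
     \<and> (\<forall>d \<in> EvenDerJ emb \<delta>. \<exists>!(d1, d2, d3, d4).
           d1 \<in> DerJ0 emb \<delta> (False, False) \<and> d2 \<in> DerJ0 emb \<delta> (True, False)
         \<and> d3 \<in> DerJ0 emb \<delta> (False, True) \<and> d4 \<in> DerJ0 emb \<delta> (True, True)
         \<and> d = (\<lambda>c. d1 c + d2 c + d3 c + d4 c))
     \<and> (\<forall>\<alpha>. \<alpha> \<noteq> (False, False) \<longrightarrow> DerJ0 emb \<delta> \<alpha> \<subseteq> InderJ emb \<delta>)"
proof -
  interpret cheng_kac emb \<delta> using assms by unfold_locales
  have inner_K: "tildeD ` InderK0 emb \<delta> =
      {tildeD (checkK \<mu> a) | \<mu> a. (\<exists>f. \<mu> = (\<lambda>z. f * \<delta> z))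
                                 \<and> (\<forall>z. \<mu> (\<delta> z) - \<delta> (\<mu> z) = 2 * a * \<delta> z)}"
    using span_Dx_InderK0 span_Dx_checkK by simp
  show ?thesis
    by (intro conjI ballI allI impI DerJ0_00_eq InderJ_00_eq span_Dx_InderK0 inner_K
        DerJ0_10_eq DerJ0_01_eq DerJ0_11_eq EvenDerJ_decomposition DerJ0_inner)
qed

end
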